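(* Let $\mathbb{K}$ be an algebraically closed field of characteristic $0$. Let $f\in\mathbb{K}[X,Y]$ have degree $d$ and let $G,H\in\mathbb{K}[X,Y]$ have degree $\le\nu-1$, where $\nu\ge d$. Suppose $P\in\mathbb{K}[X,Y]$ and $s\in\mathbb{N}$ satisfy $$\mathbf{d}\Big(\frac{P}{f^s}\Big)=\frac1f\big(G\,\mathbf{d}X+H\,\mathbf{d}Y\big),$$ i.e. $\partial_X(P/f^s)=G/f$ and $\partial_Y(P/f^s)=H/f$, and that $f$ does not divide $P$ if $s\ge1$. Then either $s=1$ and $\deg P\le\nu$, or $s=0$ and $\deg P\le\nu-d$. *)

theory Defs
  imports "HOL-Computational_Algebra.Polynomial"
begin

class alg_closed_field = field +
  assumes alg_closed: "\<lbrakk>n > 0; c n \<noteq> 0\<rbrakk> \<Longrightarrow> \<exists>x. (\<Sum>i\<le>n. c i * x ^ i) = 0"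

text \<open>Bivariate polynomials K[X,Y] are represented as 'a poly poly = (K[X])[Y]:
  the outer variable is Y, the coefficients are polynomials in X.\<close>

definition total_degree :: "'a::zero poly poly \<Rightarrow> nat" where
  "total_degree p = Max (insert 0 {degree (coeff p j) + j | j. coeff p j \<noteq> 0})"

definition dX :: "'a::idom poly poly \<Rightarrow> 'a poly poly" where
  "dX p = map_poly pderiv p"

definition dY :: "'a::idom poly poly \<Rightarrow> 'a poly poly" where
  "dY p = pderiv p"

end

theory Submission
  imports Defs "HOL-Computational_Algebra.Polynomial_Factorial" "HOL-Computational_Algebra.Field_as_Ring"
begin

text \<open>Combining the two equations with X and Y gives \<open>f E(P) - s E(f) P = (X G + Y H) f\<^sup>s\<close> for the
  Euler operator \<open>E = X \<partial>\<^sub>X + Y \<partial>\<^sub>Y\<close>. Substituting \<open>X \<mapsto> X T, Y \<mapsto> T\<close> turns total degree into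
  degree in \<open>T\<close> and \<open>E\<close> into \<open>T d/dT\<close>; the top coefficient of the left-hand side is then
  \<open>(deg P - s deg f)\<close> times the leading coefficients, so unless \<open>deg P = s deg f\<close> we get
  \<open>deg f + deg P \<le> \<nu> + s deg f\<close>, which gives both conclusions once \<open>s \<le> 1\<close> is known.

  For \<open>s \<le> 1\<close>, suppose \<open>s \<ge> 2\<close> and that \<open>f\<close> does not divide \<open>P\<close>. Then some prime \<open>q\<close> occurs in \<open>P\<close> with a
  multiplicity \<open>v\<close> smaller than its multiplicity \<open>m\<close> in \<open>f\<close>, and one of the partial derivatives \<open>D\<close>
  satisfies \<open>\<not> q dvd D q\<close>. In \<open>f D P - s D(f) P\<close> the power \<open>q\<^bsup>m+v-1\<^esup>\<close> splits off, leaving a factor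
  congruent to \<open>(v - s m) D(q) f\<^sub>1 P\<^sub>1\<close> modulo \<open>q\<close>, which is not divisible by \<open>q\<close>; but the right-hand
  side is divisible by \<open>q\<^bsup>s m\<^esup>\<close> and \<open>s m \<ge> 2m > m + v - 1\<close>.\<close>

lemma map_poly_additive:
  assumes "h 0 = 0" and "\<And>x y. h (x + y) = h x + h y"
  shows "map_poly h (p + q) = map_poly h p + map_poly h q"
  by (rule poly_eqI) (simp add: coeff_map_poly assms)

lemma map_poly_multiplicative:
  assumes "h 0 = 0" and "\<And>x y. h (x + y) = h x + h y" and "\<And>x y. h (x * y) = h x * h y"
  shows "map_poly h (p * q) = map_poly h p * map_poly h q"
proof (rule poly_eqI)
  fix n
  have "h (\<Sum>i\<le>n. coeff p i * coeff q (n - i)) = (\<Sum>i\<le>n. h (coeff p i * coeff q (n - i)))"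
    using sum_comp_morphism[of h "\<lambda>i. coeff p i * coeff q (n - i)" "{..n}", OF assms(1,2)] by simp
  thus "coeff (map_poly h (p * q)) n = coeff (map_poly h p * map_poly h q) n"
    by (simp add: coeff_map_poly coeff_mult assms)
qed

section \<open>Derivations and the order of a pole\<close>

definition derivation :: "('a::comm_ring_1 \<Rightarrow> 'a) \<Rightarrow> bool" where
  "derivation D \<longleftrightarrow> (\<forall>a b. D (a + b) = D a + D b) \<and> (\<forall>a b. D (a * b) = a * D b + D a * b)"

lemma derivation_mult: "derivation D \<Longrightarrow> D (a * b) = a * D b + D a * b"
  by (simp add: derivation_def)

lemma derivation_power_mult:
  assumes "derivation D"
  shows "q * D (q ^ n * a) = q ^ n * (q * D a + of_nat n * D q * a)"
proof (induction n)
  case (Suc n)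
  have "q * D (q ^ Suc n * a) = q * (q * D (q ^ n * a)) + q * D q * (q ^ n * a)"
    using derivation_mult[OF assms, of q "q ^ n * a"] by (simp add: algebra_simps)
  also have "\<dots> = q ^ Suc n * (q * D a + of_nat (Suc n) * D q * a)"
    unfolding Suc.IH by (simp add: algebra_simps)
  finally show ?case .
qed simp

text \<open>Multiplying by \<open>q\<close> keeps the exponent \<open>m + v - 1\<close>, which would be truncated for \<open>m = 0\<close>,
  out of the statement.\<close>

lemma derivation_prime_power_factor:
  assumes "derivation D"
  shows "q * ((q ^ m * f) * D (q ^ v * P) - of_nat s * D (q ^ m * f) * (q ^ v * P))
    = q ^ (m + v) * (q * (f * D P - of_nat s * D f * P) + (of_nat v - of_nat s * of_nat m) * D q * f * P)"
proof -
  have "q * ((q ^ m * f) * D (q ^ v * P) - of_nat s * D (q ^ m * f) * (q ^ v * P))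
      = (q ^ m * f) * (q * D (q ^ v * P)) - of_nat s * (q * D (q ^ m * f)) * (q ^ v * P)"
    by (simp add: algebra_simps)
  also have "\<dots> = q ^ (m + v) * (q * (f * D P - of_nat s * D f * P) + (of_nat v - of_nat s * of_nat m) * D q * f * P)"
    unfolding derivation_power_mult[OF assms] by (simp add: algebra_simps power_add)
  finally show ?thesis .
qed

lemma derivation_prime_power_not_dvd:
  fixes D :: "'a::idom \<Rightarrow> 'a"
  assumes D: "derivation D" and q: "prime_elem q" and "\<not> q dvd D q"
    and "\<not> q dvd (of_nat v - of_nat s * of_nat m)" and "\<not> q dvd f" and "\<not> q dvd P"
  shows "\<not> q ^ (m + v) dvd (q ^ m * f) * D (q ^ v * P) - of_nat s * D (q ^ m * f) * (q ^ v * P)"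
proof
  define Z where "Z = q * (f * D P - of_nat s * D f * P) + (of_nat v - of_nat s * of_nat m) * D q * f * P"
  assume "q ^ (m + v) dvd (q ^ m * f) * D (q ^ v * P) - of_nat s * D (q ^ m * f) * (q ^ v * P)"
  hence "q ^ (m + v) * q dvd q ^ (m + v) * Z"
    unfolding Z_def derivation_prime_power_factor[OF D, symmetric] by (simp add: mult.commute)
  hence "q dvd Z" using q by (simp add: prime_elem_def)
  hence "q dvd (of_nat v - of_nat s * of_nat m) * D q * f * P"
    unfolding Z_def by (simp add: dvd_add_right_iff)
  thus False using assms by (simp add: prime_elem_dvd_mult_iff)
qed

lemma derivation_dX: "derivation (dX :: 'a::idom poly poly \<Rightarrow> _)"
proof -
  have "dX (a + b) = dX a + dX b" "dX (a * b) = a * dX b + dX a * b" for a b :: "'a poly poly"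
  proof -
    show "dX (a + b) = dX a + dX b"
      by (rule poly_eqI) (simp add: dX_def coeff_map_poly pderiv_add)
    show "dX (a * b) = a * dX b + dX a * b"
    proof (rule poly_eqI)
      fix n
      have "pderiv (coeff (a * b) n)
          = (\<Sum>i\<le>n. coeff a i * pderiv (coeff b (n - i)) + pderiv (coeff a i) * coeff b (n - i))"
        unfolding coeff_mult higher_pderiv_sum[where n = 1, simplified] by (simp add: pderiv_mult algebra_simps)
      thus "coeff (dX (a * b)) n = coeff (a * dX b + dX a * b) n"
        by (simp add: dX_def coeff_map_poly coeff_mult sum.distrib)
    qed
  qed
  thus ?thesis by (simp add: derivation_def)
qed

lemma derivation_dY: "derivation (dY :: 'a::idom poly poly \<Rightarrow> _)"
  by (simp add: derivation_def dY_def pderiv_add pderiv_mult mult.commute)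

lemma not_dvd_dX_or_not_dvd_dY:
  fixes q :: "'a::field_char_0 poly poly"
  assumes "q \<noteq> 0" and "\<not> is_unit q"
  shows "\<not> q dvd dX q \<or> \<not> q dvd dY q"
proof (cases "degree q = 0")
  case False
  hence "pderiv q \<noteq> 0" "degree (pderiv q) < degree q" by (simp_all add: pderiv_eq_0_iff degree_pderiv)
  hence "\<not> q dvd pderiv q" using dvd_imp_degree_le by fastforce
  thus ?thesis by (simp add: dY_def)
next
  case True
  then obtain c where qc: "q = [:c:]" by (rule degree_eq_zeroE)
  with assms have "c \<noteq> 0" "\<not> is_unit c" by (auto simp: is_unit_const_poly_iff)
  hence "degree c \<noteq> 0" by (simp add: is_unit_iff_degree)
  hence "pderiv c \<noteq> 0" "degree (pderiv c) < degree c" by (simp_all add: pderiv_eq_0_iff degree_pderiv)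
  hence "\<not> c dvd pderiv c" using dvd_imp_degree_le by fastforce
  thus ?thesis by (simp add: qc dX_def map_poly_pCons)
qed

lemma not_dvd_of_int_poly_poly:
  fixes q :: "'a::field_char_0 poly poly"
  assumes "\<not> is_unit q" and "k \<noteq> 0"
  shows "\<not> q dvd of_int k"
proof
  assume "q dvd of_int k"
  moreover have "is_unit (of_int k :: 'a poly poly)"
    using assms(2) by (simp add: of_int_poly is_unit_const_poly_iff dvd_field_iff)
  ultimately show False using assms(1) dvd_unit_imp_unit by blast
qed

lemma derivation_power_not_dvd:
  fixes D :: "'a::idom \<Rightarrow> 'a"
  assumes "derivation D" and "prime_elem q" and "\<not> q dvd D q"
    and "\<not> q dvd (of_nat v - of_nat s * of_nat m)" and "\<not> q dvd f" and "\<not> q dvd P"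
    and "v < m" and "s \<ge> 2"
  shows "\<not> (q ^ m * f) ^ s dvd (q ^ m * f) * D (q ^ v * P) - of_nat s * D (q ^ m * f) * (q ^ v * P)"
proof
  have "m * 2 \<le> m * s" using \<open>s \<ge> 2\<close> by simp
  hence "m + v \<le> m * s" using \<open>v < m\<close> by linarith
  hence "q ^ (m + v) dvd (q ^ m * f) ^ s"
    unfolding power_mult_distrib power_mult[symmetric] by (simp add: le_imp_power_dvd dvd_mult2)
  moreover assume "(q ^ m * f) ^ s dvd (q ^ m * f) * D (q ^ v * P) - of_nat s * D (q ^ m * f) * (q ^ v * P)"
  ultimately show False
    using derivation_prime_power_not_dvd[OF assms(1-6)] dvd_trans by blast
qed

lemma dvd_of_pole_order_ge_2_gcd:
  fixes f G H P :: "'a::{field_char_0,field_gcd} poly poly"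
  assumes "f \<noteq> 0" and "s \<ge> 2"
    and eqX: "f * dX P - of_nat s * dX f * P = G * f ^ s"
    and eqY: "f * dY P - of_nat s * dY f * P = H * f ^ s"
  shows "f dvd P"
proof (rule ccontr)
  assume "\<not> f dvd P"
  then obtain q where "prime q" and "multiplicity q P < multiplicity q f"
    using multiplicity_le_imp_dvd[OF \<open>f \<noteq> 0\<close>] not_le by blast
  hence q: "prime_elem q" "\<not> is_unit q" "q \<noteq> 0" by (auto intro: prime_imp_prime_elem)
  define m where "m = multiplicity q f"
  define v where "v = multiplicity q P"
  have "v < m" using \<open>multiplicity q P < multiplicity q f\<close> by (simp add: m_def v_def)
  obtain f1 where f1: "f = q ^ m * f1" "\<not> q dvd f1"
    using multiplicity_decompose'[OF \<open>f \<noteq> 0\<close> q(2)] m_def by metis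
  have "P \<noteq> 0" using \<open>\<not> f dvd P\<close> by auto
  then obtain P1 where P1: "P = q ^ v * P1" "\<not> q dvd P1"
    using multiplicity_decompose'[OF _ q(2)] v_def by metis
  have "m \<le> s * m" using \<open>s \<ge> 2\<close> by simp
  hence "v \<noteq> s * m" using \<open>v < m\<close> by linarith
  hence "int v - int s * int m \<noteq> 0" by (simp flip: of_nat_mult)
  from not_dvd_of_int_poly_poly[OF q(2) this]
  have "\<not> q dvd (of_nat v - of_nat s * of_nat m)" by simp
  note not_dvd = derivation_power_not_dvd[OF _ q(1) _ this f1(2) P1(2) \<open>v < m\<close> \<open>s \<ge> 2\<close>]
  from not_dvd_dX_or_not_dvd_dY[OF q(3,2)] show False
  proof
    assume "\<not> q dvd dX q"
    from not_dvd[OF derivation_dX this] show False using eqX unfolding f1(1) P1(1) by simp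
  next
    assume "\<not> q dvd dY q"
    from not_dvd[OF derivation_dY this] show False using eqY unfolding f1(1) P1(1) by simp
  qed
qed

section \<open>A factorial copy of a field\<close>

text \<open>A field is not in general an instance of \<open>field_gcd\<close>, so \<open>'a poly poly\<close> need not be a
  factorial ring. The copy \<open>'a gcd_field\<close> carries the trivial Euclidean structure, making its
  bivariate polynomials factorial.\<close>

typedef 'a gcd_field = "UNIV :: 'a set"
  morphisms of_gcd_field to_gcd_field
  by simp

setup_lifting type_definition_gcd_field

instantiation gcd_field :: (field) field
begin
lift_definition zero_gcd_field :: "'a gcd_field" is 0 .
lift_definition one_gcd_field :: "'a gcd_field" is 1 .
lift_definition plus_gcd_field :: "'a gcd_field \<Rightarrow> 'a gcd_field \<Rightarrow> 'a gcd_field" is "(+)" .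
lift_definition minus_gcd_field :: "'a gcd_field \<Rightarrow> 'a gcd_field \<Rightarrow> 'a gcd_field" is "(-)" .
lift_definition uminus_gcd_field :: "'a gcd_field \<Rightarrow> 'a gcd_field" is uminus .
lift_definition times_gcd_field :: "'a gcd_field \<Rightarrow> 'a gcd_field \<Rightarrow> 'a gcd_field" is "(*)" .
lift_definition inverse_gcd_field :: "'a gcd_field \<Rightarrow> 'a gcd_field" is inverse .
lift_definition divide_gcd_field :: "'a gcd_field \<Rightarrow> 'a gcd_field \<Rightarrow> 'a gcd_field" is "(/)" .
instance
  by (standard; transfer) (simp_all add: algebra_simps divide_inverse)
end

lemma of_gcd_field_of_nat [simp]: "of_gcd_field (of_nat n) = of_nat n"
  by (induction n) (simp_all add: zero_gcd_field.rep_eq one_gcd_field.rep_eq plus_gcd_field.rep_eq)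

instance gcd_field :: (field_char_0) field_char_0
  by standard (metis injI of_gcd_field_of_nat of_nat_eq_iff)

instantiation gcd_field :: (field)
  "{unique_euclidean_ring, normalization_euclidean_semiring, normalization_semidom_multiplicative}"
begin
definition [simp]: "normalize_gcd_field = (normalize_field :: 'a gcd_field \<Rightarrow> _)"
definition [simp]: "unit_factor_gcd_field = (unit_factor_field :: 'a gcd_field \<Rightarrow> _)"
definition [simp]: "modulo_gcd_field = (mod_field :: 'a gcd_field \<Rightarrow> _)"
definition [simp]: "euclidean_size_gcd_field = (euclidean_size_field :: 'a gcd_field \<Rightarrow> _)"
definition [simp]: "division_segment (x :: 'a gcd_field) = 1"
instance
  by standard (simp_all add: dvd_field_iff field_split_simps split: if_splits)
end

instantiation gcd_field :: (field) euclidean_ring_gcd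
begin
definition "gcd_gcd_field = (Euclidean_Algorithm.gcd :: 'a gcd_field \<Rightarrow> _)"
definition "lcm_gcd_field = (Euclidean_Algorithm.lcm :: 'a gcd_field \<Rightarrow> _)"
definition "Gcd_gcd_field = (Euclidean_Algorithm.Gcd :: 'a gcd_field set \<Rightarrow> _)"
definition "Lcm_gcd_field = (Euclidean_Algorithm.Lcm :: 'a gcd_field set \<Rightarrow> _)"
instance
  by standard (simp_all add: gcd_gcd_field_def lcm_gcd_field_def Gcd_gcd_field_def Lcm_gcd_field_def)
end

instance gcd_field :: (field) field_gcd ..

lemma to_gcd_field_hom [simp]:
  "to_gcd_field 0 = 0" "to_gcd_field 1 = 1"
  "to_gcd_field (a + b) = to_gcd_field a + to_gcd_field b"
  "to_gcd_field (a * b) = to_gcd_field a * to_gcd_field b"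
  "to_gcd_field (of_nat n) = of_nat n"
  by (simp_all add: zero_gcd_field.abs_eq one_gcd_field.abs_eq plus_gcd_field.abs_eq
      times_gcd_field.abs_eq) (metis of_gcd_field_inverse of_gcd_field_of_nat)

lemma of_gcd_field_hom [simp]:
  "of_gcd_field 0 = 0"
  "of_gcd_field (a + b) = of_gcd_field a + of_gcd_field b"
  "of_gcd_field (a * b) = of_gcd_field a * of_gcd_field b"
  by (simp_all add: zero_gcd_field.rep_eq plus_gcd_field.rep_eq times_gcd_field.rep_eq)

definition embed_gcd_field :: "'a::field poly poly \<Rightarrow> 'a gcd_field poly poly" where
  "embed_gcd_field = map_poly (map_poly to_gcd_field)"

lemma map_poly_to_gcd_field_hom:
  "map_poly to_gcd_field (p + q) = map_poly to_gcd_field p + map_poly to_gcd_field q"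
  "map_poly to_gcd_field (p * q) = map_poly to_gcd_field p * map_poly to_gcd_field q"
  "map_poly to_gcd_field (of_nat n) = of_nat n"
  by (simp_all add: map_poly_additive map_poly_multiplicative of_nat_poly map_poly_pCons)

lemma embed_gcd_field_hom:
  "embed_gcd_field (p + q) = embed_gcd_field p + embed_gcd_field q"
  "embed_gcd_field (p * q) = embed_gcd_field p * embed_gcd_field q"
  "embed_gcd_field (of_nat n) = of_nat n"
  unfolding embed_gcd_field_def
  by (simp_all add: map_poly_additive map_poly_multiplicative map_poly_to_gcd_field_hom
      of_nat_poly map_poly_pCons)

lemma embed_gcd_field_diff: "embed_gcd_field (p - q) = embed_gcd_field p - embed_gcd_field q"
  by (metis embed_gcd_field_hom(1) diff_add_cancel eq_diff_eq)

lemma embed_gcd_field_power: "embed_gcd_field (p ^ n) = embed_gcd_field p ^ n"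
proof (induction n)
  case 0
  show ?case by (simp add: embed_gcd_field_def)
qed (simp add: embed_gcd_field_hom)

lemma embed_gcd_field_dX: "embed_gcd_field (dX p) = dX (embed_gcd_field p)"
proof -
  have "map_poly to_gcd_field (pderiv c) = pderiv (map_poly to_gcd_field c)" for c :: "'a poly"
    by (rule poly_eqI) (simp add: coeff_map_poly coeff_pderiv del: of_nat_Suc)
  thus ?thesis by (simp add: embed_gcd_field_def dX_def map_poly_map_poly o_def)
qed

lemma embed_gcd_field_dY: "embed_gcd_field (dY p) = dY (embed_gcd_field p)"
  unfolding embed_gcd_field_def dY_def
  by (rule poly_eqI) (simp add: coeff_map_poly coeff_pderiv map_poly_to_gcd_field_hom del: of_nat_Suc)

lemma embed_gcd_field_dvd_iff: "embed_gcd_field p dvd embed_gcd_field q \<longleftrightarrow> p dvd q"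
proof
  define lower :: "'a gcd_field poly poly \<Rightarrow> 'a poly poly" where
    "lower = map_poly (map_poly of_gcd_field)"
  have lower_embed: "lower (embed_gcd_field r) = r" for r
    by (simp add: lower_def embed_gcd_field_def map_poly_map_poly o_def to_gcd_field_inverse)
  have "map_poly of_gcd_field (a * b) = map_poly of_gcd_field a * map_poly of_gcd_field b" for a b
    by (simp add: map_poly_multiplicative)
  hence lower_mult: "lower (a * b) = lower a * lower b" for a b
    unfolding lower_def by (simp add: map_poly_additive map_poly_multiplicative)
  assume "embed_gcd_field p dvd embed_gcd_field q"
  then obtain c where "embed_gcd_field q = embed_gcd_field p * c" by (elim dvdE)
  hence "q = p * lower c" by (metis lower_embed lower_mult)
  thus "p dvd q" by simp
qed (auto simp: embed_gcd_field_hom)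

lemma dvd_of_pole_order_ge_2:
  fixes f G H P :: "'a::field_char_0 poly poly"
  assumes "f \<noteq> 0" and "s \<ge> 2"
    and eqX: "f * dX P - of_nat s * dX f * P = G * f ^ s"
    and eqY: "f * dY P - of_nat s * dY f * P = H * f ^ s"
  shows "f dvd P"
proof -
  have nonzero: "embed_gcd_field f \<noteq> 0"
    using \<open>f \<noteq> 0\<close> embed_gcd_field_dvd_iff[of 0 f] by (auto simp: embed_gcd_field_def)
  have embedded_eqX: "embed_gcd_field f * dX (embed_gcd_field P) - of_nat s * dX (embed_gcd_field f) * embed_gcd_field P
      = embed_gcd_field G * embed_gcd_field f ^ s"
    using arg_cong[OF eqX, of embed_gcd_field]
    by (simp add: embed_gcd_field_diff embed_gcd_field_hom embed_gcd_field_power embed_gcd_field_dX)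
  have embedded_eqY: "embed_gcd_field f * dY (embed_gcd_field P) - of_nat s * dY (embed_gcd_field f) * embed_gcd_field P
      = embed_gcd_field H * embed_gcd_field f ^ s"
    using arg_cong[OF eqY, of embed_gcd_field]
    by (simp add: embed_gcd_field_diff embed_gcd_field_hom embed_gcd_field_power embed_gcd_field_dY)
  have "embed_gcd_field f dvd embed_gcd_field P"
    using nonzero \<open>s \<ge> 2\<close> embedded_eqX embedded_eqY by (rule dvd_of_pole_order_ge_2_gcd)
  thus ?thesis by (simp add: embed_gcd_field_dvd_iff)
qed

section \<open>The Euler operator in one variable\<close>

lemma coeff_mult_degree_le_sum:
  fixes p q :: "'a::comm_semiring_1 poly"
  assumes "degree p \<le> m" and "degree q \<le> n"
  shows "coeff (p * q) (m + n) = coeff p m * coeff q n"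
proof (cases "degree p = m \<and> degree q = n")
  case True
  thus ?thesis using coeff_mult_degree_sum[of p q] by simp
next
  case False
  hence "coeff p m = 0 \<or> coeff q n = 0" using assms by (auto intro: coeff_eq_0)
  moreover have "coeff (p * q) (m + n) = 0"
    using degree_mult_le[of p q] assms False by (intro coeff_eq_0) linarith
  ultimately show ?thesis by auto
qed

lemma coeff_of_nat_mult: "coeff (of_nat n * p) k = of_nat n * coeff p k"
  by (simp add: of_nat_poly)

lemma coeff_pCons_0_pderiv: "coeff (pCons 0 (pderiv p)) k = of_nat k * coeff p k"
  by (cases k) (simp_all add: coeff_pderiv del: of_nat_Suc)

lemma degree_pCons_0_pderiv_le: "degree (pCons 0 (pderiv p)) \<le> degree p"
  by (rule degree_le) (simp add: coeff_pCons_0_pderiv coeff_eq_0)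

lemma degree_euler_wronskian:
  fixes F Q :: "'a::{idom,ring_char_0} poly"
  assumes "F \<noteq> 0" and "Q \<noteq> 0" and "degree Q \<noteq> s * degree F"
  shows "degree (F * pCons 0 (pderiv Q) - of_nat s * pCons 0 (pderiv F) * Q) = degree F + degree Q"
proof (rule antisym)
  have scaled: "degree (of_nat s * pCons 0 (pderiv F)) \<le> degree F"
    using degree_mult_le[of "of_nat s" "pCons 0 (pderiv F)"] degree_pCons_0_pderiv_le[of F]
    by (simp add: of_nat_poly)
  hence "degree (of_nat s * pCons 0 (pderiv F) * Q) \<le> degree F + degree Q"
    using degree_mult_le le_trans add_right_mono by blast
  moreover have "degree (F * pCons 0 (pderiv Q)) \<le> degree F + degree Q"
    using degree_mult_le[of F] degree_pCons_0_pderiv_le[of Q] add_left_mono le_trans by blast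
  ultimately show "degree (F * pCons 0 (pderiv Q) - of_nat s * pCons 0 (pderiv F) * Q) \<le> degree F + degree Q"
    by (intro degree_diff_le)
  have leading_1: "coeff (F * pCons 0 (pderiv Q)) (degree F + degree Q) = lead_coeff F * (of_nat (degree Q) * lead_coeff Q)"
    by (simp only: coeff_mult_degree_le_sum[OF order_refl degree_pCons_0_pderiv_le] coeff_pCons_0_pderiv)
  have leading_2: "coeff (of_nat s * pCons 0 (pderiv F) * Q) (degree F + degree Q)
      = coeff (of_nat s * pCons 0 (pderiv F)) (degree F) * lead_coeff Q"
    by (rule coeff_mult_degree_le_sum[OF scaled order_refl])
  have leading_3: "coeff (of_nat s * pCons 0 (pderiv F)) (degree F) = of_nat s * (of_nat (degree F) * lead_coeff F)"
    by (simp only: coeff_of_nat_mult coeff_pCons_0_pderiv)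
  have "coeff (F * pCons 0 (pderiv Q) - of_nat s * pCons 0 (pderiv F) * Q) (degree F + degree Q)
      = (of_nat (degree Q) - of_nat s * of_nat (degree F)) * lead_coeff F * lead_coeff Q"
    by (simp only: coeff_diff leading_1 leading_2 leading_3) (simp add: algebra_simps)
  also have "\<dots> \<noteq> 0"
    using assms by (simp flip: of_nat_mult)
  finally show "degree F + degree Q \<le> degree (F * pCons 0 (pderiv Q) - of_nat s * pCons 0 (pderiv F) * Q)"
    by (rule le_degree)
qed

section \<open>Radial substitution\<close>

text \<open>\<open>radial p\<close> is \<open>p(X T, T)\<close>, a polynomial in \<open>T\<close> (the outer variable) over \<open>K[X]\<close>: its
  coefficient of \<open>T\<^sup>k\<close> is the homogeneous part of degree \<open>k\<close> of \<open>p\<close> at \<open>Y = 1\<close>.\<close>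

definition radial_coeff :: "'a::comm_ring_1 poly \<Rightarrow> 'a poly poly" where
  "radial_coeff c = poly (map_poly (\<lambda>a. [:[:a:]:]) c) [:0, [:0, 1:]:]"

definition radial :: "'a::comm_ring_1 poly poly \<Rightarrow> 'a poly poly" where
  "radial p = poly (map_poly radial_coeff p) [:0, 1:]"

lemma radial_coeff_0 [simp]: "radial_coeff 0 = 0"
  by (simp add: radial_coeff_def)

lemma radial_coeff_pCons: "radial_coeff (pCons a c) = [:[:a:]:] + [:0, [:0, 1:]:] * radial_coeff c"
  by (simp add: radial_coeff_def map_poly_pCons)

lemma radial_pCons: "radial (pCons a p) = radial_coeff a + [:0, 1:] * radial p"
  by (simp add: radial_def map_poly_pCons)

lemma coeff_radial_coeff: "coeff (coeff (radial_coeff c) k) i = (if i = k then coeff c i else 0)"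
proof (induction c arbitrary: k i)
  case (pCons a c)
  show ?case
    by (cases k; cases i) (simp_all add: radial_coeff_pCons coeff_pCons pCons.IH)
qed (simp add: radial_coeff_def)

lemma coeff_radial:
  "coeff (coeff (radial p) k) i = (if i \<le> k then coeff (coeff p (k - i)) i else 0)"
proof (induction p arbitrary: k i)
  case (pCons a p)
  show ?case
    by (cases k) (auto simp add: radial_pCons coeff_radial_coeff pCons.IH Suc_diff_le)
qed (simp add: radial_def)

lemma radial_coeff_hom:
  "radial_coeff (a + b) = radial_coeff a + radial_coeff b"
  "radial_coeff (a * b) = radial_coeff a * radial_coeff b"
  unfolding radial_coeff_def
  by (simp_all add: map_poly_additive map_poly_multiplicative poly_add poly_mult mult_to_poly)

lemma radial_hom [simp]:
  "radial 0 = 0" "radial 1 = 1"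
  "radial (p + q) = radial p + radial q"
  "radial (p * q) = radial p * radial q"
  unfolding radial_def
  by (simp_all add: map_poly_additive map_poly_multiplicative poly_add poly_mult radial_coeff_hom
      radial_coeff_def map_poly_1 one_pCons[symmetric])

lemma radial_diff [simp]: "radial (p - q) = radial p - radial q"
  by (metis radial_hom(3) diff_add_cancel eq_diff_eq)

lemma radial_power [simp]: "radial (p ^ n) = radial p ^ n"
  by (induction n) simp_all

lemma radial_of_nat [simp]: "radial (of_nat n) = of_nat n"
  by (induction n) simp_all

lemma radial_X: "radial [:[:0, 1:]:] = [:0, [:0, 1:]:]"
  by (simp add: radial_def radial_coeff_def map_poly_pCons)

lemma radial_Y: "radial [:0, 1:] = [:0, 1:]"
  by (simp add: radial_def radial_coeff_def map_poly_pCons one_pCons[symmetric])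

lemma coeff_radial_nonzero:
  assumes "coeff p j \<noteq> 0"
  shows "coeff (radial p) (degree (coeff p j) + j) \<noteq> 0"
proof -
  have "coeff (coeff (radial p) (degree (coeff p j) + j)) (degree (coeff p j)) \<noteq> 0"
    using assms by (simp add: coeff_radial)
  thus ?thesis by auto
qed

lemma radial_eq_0_iff [simp]: "radial p = 0 \<longleftrightarrow> p = 0"
proof
  assume "radial p = 0"
  show "p = 0"
  proof (rule ccontr)
    assume "p \<noteq> 0"
    hence "coeff (radial p) (degree (lead_coeff p) + degree p) \<noteq> 0"
      by (simp add: coeff_radial_nonzero)
    thus False using \<open>radial p = 0\<close> by simp
  qed
qed simp

lemma finite_total_degree_candidates: "finite {degree (coeff p j) + j | j. coeff p j \<noteq> 0}"
proof -
  have "{degree (coeff p j) + j | j. coeff p j \<noteq> 0} \<subseteq> (\<lambda>j. degree (coeff p j) + j) ` {..degree p}"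
    using le_degree by fastforce
  thus ?thesis using finite_subset by blast
qed

lemma le_total_degree: "coeff p j \<noteq> 0 \<Longrightarrow> degree (coeff p j) + j \<le> total_degree p"
  unfolding total_degree_def using finite_total_degree_candidates by (intro Max_ge) auto

lemma total_degree_attained:
  obtains "total_degree p = 0" | j where "coeff p j \<noteq> 0" and "total_degree p = degree (coeff p j) + j"
proof -
  have "total_degree p \<in> insert 0 {degree (coeff p j) + j | j. coeff p j \<noteq> 0}"
    unfolding total_degree_def using finite_total_degree_candidates by (intro Max_in) auto
  thus thesis using that by blast
qed

lemma degree_radial: "degree (radial p) = total_degree p"
proof (rule antisym)
  show "degree (radial p) \<le> total_degree p"
  proof (rule degree_le, intro allI impI poly_eqI)
    fix k i assume "total_degree p < k"
    show "coeff (coeff (radial p) k) i = coeff 0 i"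
    proof (cases "i \<le> k \<and> coeff (coeff p (k - i)) i \<noteq> 0")
      case True
      hence "i \<le> degree (coeff p (k - i))" and "coeff p (k - i) \<noteq> 0"
        by (auto intro: le_degree)
      with le_total_degree[OF this(2)] \<open>total_degree p < k\<close> True show ?thesis by linarith
    qed (auto simp: coeff_radial)
  qed
  show "total_degree p \<le> degree (radial p)"
    by (cases p rule: total_degree_attained) (simp_all add: le_degree coeff_radial_nonzero)
qed

lemma coeff_euler_operator:
  "coeff (coeff ([:[:0, 1:]:] * dX p + [:0, 1:] * dY p) j) i = of_nat (i + j) * coeff (coeff p j) i"
proof -
  have "coeff ([:[:0, 1:]:] * dX p) j = pCons 0 (pderiv (coeff p j))"
    by (simp add: dX_def coeff_map_poly)
  moreover have "coeff ([:0, 1:] * dY p) j = of_nat j * coeff p j"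
    by (simp add: dY_def flip: coeff_pCons_0_pderiv)
  ultimately show ?thesis by (simp add: coeff_pCons_0_pderiv coeff_of_nat_mult algebra_simps)
qed

lemma radial_euler_operator:
  "radial ([:[:0, 1:]:] * dX p + [:0, 1:] * dY p) = pCons 0 (pderiv (radial p))"
  by (intro poly_eqI) (simp only: coeff_pCons_0_pderiv coeff_of_nat_mult coeff_radial coeff_euler_operator, simp)

lemma radial_euler_equation:
  assumes "f * dX P - of_nat s * dX f * P = G * f ^ s"
    and "f * dY P - of_nat s * dY f * P = H * f ^ s"
  shows "radial f * pCons 0 (pderiv (radial P)) - of_nat s * pCons 0 (pderiv (radial f)) * radial P
    = radial ([:[:0, 1:]:] * G + [:0, 1:] * H) * radial f ^ s"
proof -
  have "f * ([:[:0, 1:]:] * dX P + [:0, 1:] * dY P) - of_nat s * ([:[:0, 1:]:] * dX f + [:0, 1:] * dY f) * P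
      = [:[:0, 1:]:] * (f * dX P - of_nat s * dX f * P) + [:0, 1:] * (f * dY P - of_nat s * dY f * P)"
    by (simp only: algebra_simps)
  also have "\<dots> = ([:[:0, 1:]:] * G + [:0, 1:] * H) * f ^ s"
    unfolding assms by (simp only: algebra_simps)
  finally have "radial (f * ([:[:0, 1:]:] * dX P + [:0, 1:] * dY P) - of_nat s * ([:[:0, 1:]:] * dX f + [:0, 1:] * dY f) * P)
     = radial (([:[:0, 1:]:] * G + [:0, 1:] * H) * f ^ s)" by (rule arg_cong)
  thus ?thesis
    by (simp only: radial_diff radial_hom(4) radial_power radial_of_nat radial_euler_operator)
qed

lemma total_degree_0 [simp]: "total_degree 0 = 0"
  by (simp add: total_degree_def)

lemma total_degree_add_le:
  fixes p q :: "'a::comm_ring_1 poly poly"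
  shows "total_degree (p + q) \<le> max (total_degree p) (total_degree q)"
  using degree_add_le_max[of "radial p" "radial q"] by (simp only: degree_radial flip: radial_hom(3))

lemma total_degree_mult_le:
  fixes p q :: "'a::comm_ring_1 poly poly"
  shows "total_degree (p * q) \<le> total_degree p + total_degree q"
  using degree_mult_le[of "radial p" "radial q"] by (simp only: degree_radial flip: radial_hom(4))

lemma total_degree_X: "total_degree [:[:0, 1 :: 'a::comm_ring_1:]:] = 1"
  using degree_radial[of "[:[:0, 1 :: 'a:]:]"] by (simp add: radial_X)

lemma total_degree_Y: "total_degree [:0, 1 :: 'a::comm_ring_1 poly:] = 1"
  using degree_radial[of "[:0, 1 :: 'a poly:]"] by (simp add: radial_Y)

lemma total_degree_bound_of_euler_equation:
  fixes f G H P :: "'a::field_char_0 poly poly"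
  assumes "f \<noteq> 0" and "P \<noteq> 0" and "total_degree P \<noteq> s * total_degree f"
    and "total_degree ([:[:0, 1:]:] * G + [:0, 1:] * H) \<le> \<nu>"
    and eqX: "f * dX P - of_nat s * dX f * P = G * f ^ s"
    and eqY: "f * dY P - of_nat s * dY f * P = H * f ^ s"
  shows "total_degree f + total_degree P \<le> \<nu> + s * total_degree f"
proof -
  define W where "W = radial ([:[:0, 1:]:] * G + [:0, 1:] * H)"
  have "degree (radial f * pCons 0 (pderiv (radial P)) - of_nat s * pCons 0 (pderiv (radial f)) * radial P)
      = degree (radial f) + degree (radial P)"
    by (rule degree_euler_wronskian) (use assms in \<open>simp_all add: degree_radial\<close>)
  hence "total_degree f + total_degree P = degree (W * radial f ^ s)"
    unfolding radial_euler_equation[OF eqX eqY] W_def[symmetric] degree_radial by simp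
  also have "\<dots> \<le> degree W + s * total_degree f"
    using degree_mult_le[of W "radial f ^ s"] degree_power_le[of "radial f" s]
    by (simp add: degree_radial mult.commute)
  moreover have "degree W \<le> \<nu>"
    using assms(4) by (simp only: W_def degree_radial)
  ultimately show ?thesis by linarith
qed

theorem lemma1p2:
  fixes f G H P :: "'a::{alg_closed_field, field_char_0} poly poly"
    and d \<nu> s :: nat
  assumes f_nz: "f \<noteq> 0"
    and f_deg: "total_degree f = d"
    and G_deg: "G \<noteq> 0 \<longrightarrow> total_degree G \<le> \<nu> - 1"
    and H_deg: "H \<noteq> 0 \<longrightarrow> total_degree H \<le> \<nu> - 1"
    and G_nu: "G \<noteq> 0 \<longrightarrow> \<nu> \<ge> 1"
    and H_nu: "H \<noteq> 0 \<longrightarrow> \<nu> \<ge> 1"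
    and nu_ge: "\<nu> \<ge> d"
    and eqX: "f * dX P - of_nat s * dX f * P = G * f ^ s"
    and eqY: "f * dY P - of_nat s * dY f * P = H * f ^ s"
    and ndvd: "s \<ge> 1 \<longrightarrow> \<not> f dvd P"
  shows "(s = 1 \<and> total_degree P \<le> \<nu>) \<or> (s = 0 \<and> total_degree P \<le> \<nu> - d)"
proof -
  have "s \<le> 1"
  proof (rule ccontr)
    assume "\<not> s \<le> 1"
    hence "f dvd P" by (intro dvd_of_pole_order_ge_2[OF f_nz _ eqX eqY]) simp
    with ndvd \<open>\<not> s \<le> 1\<close> show False by simp
  qed
  have "total_degree ([:[:0, 1:]:] * G) \<le> \<nu>" "total_degree ([:0, 1:] * H) \<le> \<nu>"
    using total_degree_mult_le[of "[:[:0, 1:]:]" G] total_degree_mult_le[of "[:0, 1:]" H]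
      G_deg G_nu H_deg H_nu by (auto simp: total_degree_X total_degree_Y)
  hence "total_degree ([:[:0, 1:]:] * G + [:0, 1:] * H) \<le> \<nu>"
    using total_degree_add_le le_trans max.bounded_iff by blast
  from total_degree_bound_of_euler_equation[OF f_nz _ _ this eqX eqY]
  have bound: "d + total_degree P \<le> \<nu> + s * d" if "P \<noteq> 0" "total_degree P \<noteq> s * d"
    using that f_deg by simp
  show ?thesis
  proof (cases "P = 0")
    case True
    thus ?thesis using ndvd \<open>s \<le> 1\<close> by auto
  next
    case False
    thus ?thesis using bound \<open>s \<le> 1\<close> nu_ge
      by (cases "s = 0"; cases "total_degree P = s * d") (auto simp: le_Suc_eq)
  qed
qed

end
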